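(* There exist universal constants $c,c_4>0$ such that the following holds. Let $\bar Q\in\mathbb{R}^{\mathcal{X}\times\mathcal{U}}$ be fixed, let $M\ge1$ be an integer and $\delta\in(0,1)$, and let $\widetilde{\mathcal{T}}_N(\bar Q):=\frac1N\sum_{i=1}^N\widehat{\mathcal{T}}_i(\bar Q)$ be computed from $N$ i.i.d. generative samples with $N\ge\frac{c\log(8DM/\delta)}{(1-\gamma)^2}$. Let $\widehat Q$ be the unique fixed point of the shifted operator $\mathcal{T}_{\mathrm{sh}}(Q):=\mathcal{T}(Q)-\mathcal{T}(\bar Q)+\widetilde{\mathcal{T}}_N(\bar Q)$. Then with probability at least $1-\frac{\delta}{2M}$, $$\|\widehat Q-Q^*\|_\infty\le\frac{\|\bar Q-Q^*\|_\infty}{33}+c_4\Big\{\frac{\|\Sigma_Q^*(Q^* )\|_{\mathrm{diag}}^{1/2}}{1-\gamma}\sqrt{\frac{\log(8DM/\delta)}{N}}+\frac{b(Q^* )}{1-\gamma}\cdot\frac{\log(8DM/\delta)}{N}\Big\}.$$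
   Context: MDP with finite state space $\mathcal{X}$, finite action space $\mathcal{U}$, $D:=|\mathcal{X}||\mathcal{U}|$, transition kernels $P_u(\cdot\mid x)$, reward $r(x,u)$, discount $\gamma\in(0,1)$; $\mathcal{T}(Q)(x,u)=r(x,u)+\gamma\sum_{x'}P_u(x'\mid x)\max_{u'}Q(x',u')$ is the Bellman optimality operator with unique fixed point $Q^*$. Generative samples: i.i.d.; in sample $i$, for each $(x,u)$ independently a next state $x'\sim P_u(\cdot\mid x)$ is drawn and encoded by $Z_i^u(y\mid x)=\mathbf 1\{y=x'\}$, and $R_i(x,u)$ is independent with mean $r(x,u)$ and $|R_i(x,u)-r(x,u)|\le\bar r$ a.s. $\widehat{\mathcal{T}}_i(Q)(x,u)=R_i(x,u)+\gamma\sum_{x'}Z_i^u(x'\mid x)\max_{u'}Q(x',u')$. $\Sigma_Q^*(Q^* ):=\mathrm{Cov}(\widehat{\mathcal{T}}_1(Q^* ))$; $\|A\|_{\mathrm{diag}}:=\max_i|A_{ii}|$; $b(Q):=\bar r+\gamma\|Q\|_\infty$. The shifted operator $\mathcal{T}_{\mathrm{sh}}$ is a $\gamma$-contraction in $\|\cdot\|_\infty$, so its fixed point is unique. *)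

theory Defs
  imports "HOL-Probability.Probability"
begin

text \<open>States and actions are natural numbers drawn from finite nonempty sets
  Xs (states) and Us (actions). Q-functions are maps nat => nat => real;
  only their values on Xs x Us matter. P x u is the law P_u(. | x).\<close>

definition supnorm :: "nat set \<Rightarrow> nat set \<Rightarrow> (nat \<Rightarrow> nat \<Rightarrow> real) \<Rightarrow> real" where
  "supnorm Xs Us Q = Max ((\<lambda>(x,u). \<bar>Q x u\<bar>) ` (Xs \<times> Us))"

definition maxQ :: "nat set \<Rightarrow> (nat \<Rightarrow> nat \<Rightarrow> real) \<Rightarrow> nat \<Rightarrow> real" where
  "maxQ Us Q y = Max ((\<lambda>u'. Q y u') ` Us)"

definition bellman :: "nat set \<Rightarrow> nat set \<Rightarrow> (nat \<Rightarrow> nat \<Rightarrow> nat pmf) \<Rightarrow> (nat \<Rightarrow> nat \<Rightarrow> real)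
    \<Rightarrow> real \<Rightarrow> (nat \<Rightarrow> nat \<Rightarrow> real) \<Rightarrow> nat \<Rightarrow> nat \<Rightarrow> real" where
  "bellman Xs Us P r \<gamma> Q x u = r x u + \<gamma> * (\<Sum>y\<in>Xs. pmf (P x u) y * maxQ Us Q y)"

text \<open>One generative sample: s (x,u) = (x', R(x,u)) with x' the sampled next state.
  The empirical operator: R(x,u) + gamma * sum_{x'} Z(x'|x,u) max_u' Q(x',u')
  with Z the indicator of the sampled next state, i.e. the value below.\<close>
definition emp_bellman :: "nat set \<Rightarrow> real \<Rightarrow> (nat \<times> nat \<Rightarrow> nat \<times> real)
    \<Rightarrow> (nat \<Rightarrow> nat \<Rightarrow> real) \<Rightarrow> nat \<Rightarrow> nat \<Rightarrow> real" where
  "emp_bellman Us \<gamma> s Q x u = snd (s (x,u)) + \<gamma> * maxQ Us Q (fst (s (x,u)))"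

definition sample_law :: "nat set \<Rightarrow> nat set \<Rightarrow> (nat \<Rightarrow> nat \<Rightarrow> nat pmf)
    \<Rightarrow> (nat \<Rightarrow> nat \<Rightarrow> real measure) \<Rightarrow> (nat \<times> nat \<Rightarrow> nat \<times> real) measure" where
  "sample_law Xs Us P \<rho> = (\<Pi>\<^sub>M (x,u)\<in>Xs \<times> Us. (measure_pmf (P x u) \<Otimes>\<^sub>M \<rho> x u))"

definition samples_law :: "nat \<Rightarrow> nat set \<Rightarrow> nat set \<Rightarrow> (nat \<Rightarrow> nat \<Rightarrow> nat pmf)
    \<Rightarrow> (nat \<Rightarrow> nat \<Rightarrow> real measure) \<Rightarrow> (nat \<Rightarrow> nat \<times> nat \<Rightarrow> nat \<times> real) measure" where
  "samples_law N Xs Us P \<rho> = (\<Pi>\<^sub>M i\<in>{..<N}. sample_law Xs Us P \<rho>)"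

definition avg_emp_bellman :: "nat \<Rightarrow> nat set \<Rightarrow> real \<Rightarrow> (nat \<Rightarrow> nat \<times> nat \<Rightarrow> nat \<times> real)
    \<Rightarrow> (nat \<Rightarrow> nat \<Rightarrow> real) \<Rightarrow> nat \<Rightarrow> nat \<Rightarrow> real" where
  "avg_emp_bellman N Us \<gamma> \<omega> Q x u = (1 / real N) * (\<Sum>i<N. emp_bellman Us \<gamma> (\<omega> i) Q x u)"

definition shifted_bellman where
  "shifted_bellman N Xs Us P r \<gamma> \<omega> Qbar Q x u =
     bellman Xs Us P r \<gamma> Q x u - bellman Xs Us P r \<gamma> Qbar x u
     + avg_emp_bellman N Us \<gamma> \<omega> Qbar x u"

definition var_of :: "'a measure \<Rightarrow> ('a \<Rightarrow> real) \<Rightarrow> real" where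
  "var_of S f = (\<integral>s. (f s - (\<integral>t. f t \<partial>S))\<^sup>2 \<partial>S)"

text \<open>diag-norm of the covariance matrix Sigma_Q*(Q) = Cov(That_1(Q)):
  the largest diagonal entry, i.e. the largest coordinate variance.\<close>
definition sigma_diag where
  "sigma_diag Xs Us P \<rho> \<gamma> Q =
     Max ((\<lambda>(x,u). \<bar>var_of (sample_law Xs Us P \<rho>) (\<lambda>s. emp_bellman Us \<gamma> s Q x u)\<bar>) ` (Xs \<times> Us))"

end

theory Submission
  imports Defs
begin

text \<open>
  Write \<open>e = T\<^sub>N(Qbar) - T(Qbar)\<close> for the noise of the shifted operator, where
  \<open>T\<^sub>N\<close> is the empirical operator.  A fixed point \<open>Qhat\<close> satisfies
  \<open>Qhat - Q\<^sup>* = T(Qhat) - T(Q\<^sup>*) + e\<close>, so the \<open>\<gamma>\<close>-contraction of \<open>T\<close> gives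
  \<open>\<parallel>Qhat - Q\<^sup>*\<parallel> \<le> \<parallel>e\<parallel> / (1 - \<gamma>)\<close>.  Split \<open>e\<close> into \<open>T\<^sub>N(Q\<^sup>*) - Q\<^sup>*\<close>, an average
  of i.i.d. centred variables with variance at most \<open>\<parallel>\<Sigma>(Q\<^sup>*)\<parallel>\<^sub>d\<^sub>i\<^sub>a\<^sub>g\<close> and range
  \<open>2 b(Q\<^sup>*)\<close>, and \<open>(T\<^sub>N - T)(Qbar) - (T\<^sub>N - T)(Q\<^sup>*)\<close>, an average of i.i.d. centred
  variables of range \<open>2\<gamma>\<parallel>Qbar - Q\<^sup>*\<parallel>\<close>.  Bernstein's inequality and a union bound over
  the \<open>D\<close> coordinates bound both with probability \<open>1 - \<delta>/(2M)\<close>; once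
  \<open>N \<ge> c log(8DM/\<delta>) / (1-\<gamma>)\<^sup>2\<close>, the second contributes at most \<open>\<parallel>Qbar - Q\<^sup>*\<parallel>/33\<close>.
\<close>

section \<open>Bernstein's inequality\<close>

definition bernstein_radius :: "real \<Rightarrow> real \<Rightarrow> real \<Rightarrow> real" where
  "bernstein_radius V B a = 2 * sqrt (V * a) + 2 * B * a"

lemma exp_bound_abs:
  fixes y :: real assumes "\<bar>y\<bar> \<le> 1" shows "exp y \<le> 1 + y + y\<^sup>2"
proof (cases "y \<ge> 0")
  case True thus ?thesis using exp_bound assms by auto
next
  case False
  define z where "z = - y"
  have z: "0 \<le> z" "z \<le> 1" using False assms by (auto simp: z_def)
  have e: "1 + z + z\<^sup>2 / 2 \<le> exp z" using exp_lower_Taylor_quadratic z by auto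
  have pos: "0 < 1 + z + z\<^sup>2 / 2" using z zero_le_power2[of z] by linarith
  have "(1 - z + z\<^sup>2) * (1 + z + z\<^sup>2 / 2) = 1 + z\<^sup>2/2 + z^3/2 + z^4/2"
    unfolding power2_eq_square power3_eq_cube power4_eq_xxxx by (simp add: field_simps)
  also have "\<dots> \<ge> 1" using z by simp
  finally have "1 / (1 + z + z\<^sup>2 / 2) \<le> 1 - z + z\<^sup>2"
    using pos by (simp add: divide_le_eq mult.commute)
  moreover have "exp y = 1 / exp z" by (simp add: z_def exp_minus field_simps)
  moreover have "1 / exp z \<le> 1 / (1 + z + z\<^sup>2 / 2)"
    using e pos by (intro divide_left_mono) auto
  ultimately show ?thesis by (simp add: z_def)
qed

lemma (in prob_space) integral_square_le:
  fixes g :: "'a \<Rightarrow> real"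
  assumes "g \<in> borel_measurable M" and "AE s in M. \<bar>g s\<bar> \<le> B"
  shows "integrable M (\<lambda>s. (g s)\<^sup>2)" and "(\<integral>s. (g s)\<^sup>2 \<partial>M) \<le> B\<^sup>2"
proof -
  have sq: "AE s in M. (g s)\<^sup>2 \<le> B\<^sup>2"
    using assms(2) by (rule eventually_mono) (metis abs_le_square_iff abs_of_nonneg abs_ge_zero order_trans)
  show int: "integrable M (\<lambda>s. (g s)\<^sup>2)"
    using sq assms(1) by (intro integrable_const_bound[where B="B\<^sup>2"]) auto
  have "(\<integral>s. (g s)\<^sup>2 \<partial>M) \<le> (\<integral>s. B\<^sup>2 \<partial>M)"
    by (rule integral_mono_AE[OF int _ sq]) simp
  thus "(\<integral>s. (g s)\<^sup>2 \<partial>M) \<le> B\<^sup>2" by (simp add: prob_space)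
qed

lemma (in prob_space) nn_integral_exp_le_variance:
  fixes g :: "'a \<Rightarrow> real"
  assumes gm: "g \<in> borel_measurable M" and bound: "AE s in M. \<bar>g s\<bar> \<le> B"
    and mean: "expectation g = 0" and var: "(\<integral>s. (g s)\<^sup>2 \<partial>M) \<le> V"
    and l: "0 \<le> l" "l * B \<le> 1"
  shows "(\<integral>\<^sup>+s. ennreal (exp (l * g s)) \<partial>M) \<le> ennreal (exp (l\<^sup>2 * V))"
proof -
  have ig: "integrable M g" using bound gm by (intro integrable_const_bound[where B=B]) auto
  have ig2: "integrable M (\<lambda>s. (g s)\<^sup>2)" by (rule integral_square_le[OF gm bound])
  have pw: "AE s in M. exp (l * g s) \<le> 1 + l * g s + l\<^sup>2 * (g s)\<^sup>2"
    using bound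
  proof (rule eventually_mono)
    fix s assume b: "\<bar>g s\<bar> \<le> B"
    have "\<bar>l * g s\<bar> \<le> l * B" using b l by (simp add: abs_mult mult_left_mono)
    hence "\<bar>l * g s\<bar> \<le> 1" using l by linarith
    from exp_bound_abs[OF this] show "exp (l * g s) \<le> 1 + l * g s + l\<^sup>2 * (g s)\<^sup>2"
      by (simp add: power_mult_distrib)
  qed
  have nn: "AE s in M. 0 \<le> 1 + l * g s + l\<^sup>2 * (g s)\<^sup>2"
    using pw by (rule eventually_mono) (smt (verit) exp_gt_zero)
  have "(\<integral>\<^sup>+s. ennreal (exp (l * g s)) \<partial>M) \<le> (\<integral>\<^sup>+s. ennreal (1 + l * g s + l\<^sup>2 * (g s)\<^sup>2) \<partial>M)"
    using pw by (intro nn_integral_mono_AE) (auto elim!: eventually_mono intro: ennreal_leI)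
  also have "\<dots> = ennreal (\<integral>s. 1 + l * g s + l\<^sup>2 * (g s)\<^sup>2 \<partial>M)"
    using ig ig2 nn by (intro nn_integral_eq_integral) auto
  also have "(\<integral>s. 1 + l * g s + l\<^sup>2 * (g s)\<^sup>2 \<partial>M) = 1 + l * expectation g + l\<^sup>2 * (\<integral>s. (g s)\<^sup>2 \<partial>M)"
    using ig ig2 by (simp add: prob_space)
  also have "\<dots> \<le> 1 + l\<^sup>2 * V" using mean var by (simp add: mult_left_mono)
  also have "\<dots> \<le> exp (l\<^sup>2 * V)" by (rule exp_ge_add_one_self)
  finally show ?thesis by (simp add: ennreal_leI)
qed

text \<open>The Chernoff parameter: \<open>1/B\<close> in the Poisson regime \<open>2V \<le> tB\<close>, \<open>t/(2V)\<close> in the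
  Gaussian regime.\<close>
lemma bernstein_exponent:
  fixes B V a t :: real
  assumes B: "0 < B" and a: "0 < a" and V0: "0 \<le> V" and "bernstein_radius V B a \<le> t"
  defines "l \<equiv> (if 2 * V \<le> t * B then 1 / B else t / (2 * V))"
  shows "0 < l" "l * B \<le> 1" "- l * t + l\<^sup>2 * V \<le> - a"
proof -
  have t: "2 * sqrt (V * a) + 2 * B * a \<le> t" using assms(4) unfolding bernstein_radius_def .
  have sq0: "0 \<le> sqrt (V * a)" using V0 a by simp
  have tpos: "0 < t" using B a sq0 t by (smt (verit) mult_pos_pos)
  have Vpos: "0 < V" if "\<not> 2 * V \<le> t * B" using that tpos B by (smt (verit) mult_pos_pos)
  show "0 < l" using B tpos Vpos by (simp add: l_def)
  show "l * B \<le> 1" using B Vpos by (auto simp: l_def divide_le_eq)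
  show "- l * t + l\<^sup>2 * V \<le> - a"
  proof (cases "2 * V \<le> t * B")
    case True
    have "2 * B * a \<le> t" using t sq0 by linarith
    hence "2 * B * a * B \<le> t * B" using B by (intro mult_right_mono) auto
    hence "- t * B + V \<le> - (B * a) * B" using True by simp
    hence "(- t * B + V) / B\<^sup>2 \<le> (- (B * a) * B) / B\<^sup>2" by (rule divide_right_mono) simp
    moreover have "- l * t + l\<^sup>2 * V = (- t * B + V) / B\<^sup>2"
      using True B by (simp add: l_def field_simps power2_eq_square)
    ultimately show ?thesis using B by (simp add: power2_eq_square)
  next
    case False
    have "2 * sqrt (V * a) \<le> t" using t mult_pos_pos[OF B a] by linarith
    hence "(2 * sqrt (V * a))\<^sup>2 \<le> t\<^sup>2" using sq0 by (intro power_mono) auto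
    hence "- t\<^sup>2 \<le> - (4 * V * a)" using V0 a by (simp add: power_mult_distrib)
    hence "- t\<^sup>2 / (4 * V) \<le> - (4 * V * a) / (4 * V)" by (rule divide_right_mono) (use V0 in simp)
    moreover have "- l * t + l\<^sup>2 * V = - t\<^sup>2 / (4 * V)"
      using False Vpos[OF False] by (simp add: l_def field_simps power2_eq_square)
    ultimately show ?thesis using Vpos[OF False] by simp
  qed
qed

lemma bernstein_upper_tail:
  fixes S :: "'a measure" and g :: "'a \<Rightarrow> real"
  assumes ps: "prob_space S" and gm[measurable]: "g \<in> borel_measurable S"
    and bound: "AE s in S. \<bar>g s\<bar> \<le> B" and mean: "integral\<^sup>L S g = 0"
    and var: "(\<integral>s. (g s)\<^sup>2 \<partial>S) \<le> V" and B: "0 < B" and a: "0 < a"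
    and t: "bernstein_radius V B a \<le> t"
  shows "measure (PiM {..<N} (\<lambda>_. S)) {\<omega> \<in> space (PiM {..<N} (\<lambda>_. S)). real N * t \<le> (\<Sum>i<N. g (\<omega> i))}
           \<le> exp (- (real N * a))"
proof -
  interpret S: prob_space S by (rule ps)
  interpret PS: product_prob_space "\<lambda>_::nat. S" "{..<N}" by unfold_locales
  let ?M = "PiM {..<N} (\<lambda>_::nat. S)"
  have "0 \<le> (\<integral>s. (g s)\<^sup>2 \<partial>S)" by (rule integral_nonneg_AE) auto
  hence V0: "0 \<le> V" using var by linarith
  define l where "l = (if 2 * V \<le> t * B then 1 / B else t / (2 * V))"
  have lpos: "0 < l" and lB: "l * B \<le> 1" and ex: "- l * t + l\<^sup>2 * V \<le> - a"
    using bernstein_exponent[OF B a V0 t] unfolding l_def by auto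
  have mgf: "(\<integral>\<^sup>+s. ennreal (exp (l * g s)) \<partial>S) \<le> ennreal (exp (l\<^sup>2 * V))"
    using S.nn_integral_exp_le_variance[OF gm bound mean var] lpos lB by auto
  have meas: "(\<lambda>\<omega>. (\<Sum>i<N. g (\<omega> i)) * indicator (space ?M) \<omega>) \<in> borel_measurable ?M" by measurable
  have "emeasure ?M {\<omega> \<in> space ?M. real N * t \<le> (\<Sum>i<N. g (\<omega> i))}
      \<le> ennreal (exp (- l * (real N * t))) *
        (\<integral>\<^sup>+\<omega>. ennreal (exp (l * (\<Sum>i<N. g (\<omega> i)))) * indicator (space ?M) \<omega> \<partial>?M)"
    by (rule Chernoff_ineq_nn_integral_ge[OF lpos sets.top meas])
  also have "(\<integral>\<^sup>+\<omega>. ennreal (exp (l * (\<Sum>i<N. g (\<omega> i)))) * indicator (space ?M) \<omega> \<partial>?M)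
      = (\<integral>\<^sup>+\<omega>. (\<Prod>i\<in>{..<N}. ennreal (exp (l * g (\<omega> i)))) \<partial>?M)"
    by (intro nn_integral_cong) (simp add: sum_distrib_left exp_sum prod_ennreal)
  also have "\<dots> = (\<Prod>i\<in>{..<N}. (\<integral>\<^sup>+s. ennreal (exp (l * g s)) \<partial>S))"
    by (rule PS.product_nn_integral_prod) auto
  also have "ennreal (exp (- l * (real N * t))) * (\<Prod>i\<in>{..<N}. (\<integral>\<^sup>+s. ennreal (exp (l * g s)) \<partial>S))
     \<le> ennreal (exp (- l * (real N * t))) * (\<Prod>i\<in>{..<N}. ennreal (exp (l\<^sup>2 * V)))"
    by (intro mult_left_mono prod_mono_ennreal mgf) auto
  also have "\<dots> = ennreal (exp (- l * (real N * t)) * exp (l\<^sup>2 * V) ^ N)"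
    by (simp add: ennreal_mult ennreal_power)
  also have "exp (- l * (real N * t)) * exp (l\<^sup>2 * V) ^ N = exp (real N * (- l * t + l\<^sup>2 * V))"
    unfolding exp_of_nat_mult[symmetric] exp_add[symmetric] by (simp add: algebra_simps)
  also have "\<dots> \<le> ennreal (exp (- (real N * a)))"
    using mult_left_mono[OF ex, of "real N"] by (intro ennreal_leI) simp
  finally show ?thesis by (simp add: measure_def enn2real_leI)
qed

text \<open>The strict version also covers \<open>B = 0\<close>: the event is the increasing union of the
  events \<open>N (t + 1/(n+1)) \<le> \<Sum>g\<close>, each bounded with the range \<open>B + 1/(2a(n+1))\<close>.\<close>
lemma bernstein_upper_tail_strict:
  fixes S :: "'a measure" and g :: "'a \<Rightarrow> real"
  assumes ps: "prob_space S" and gm[measurable]: "g \<in> borel_measurable S"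
    and bound: "AE s in S. \<bar>g s\<bar> \<le> B" and mean: "integral\<^sup>L S g = 0"
    and var: "(\<integral>s. (g s)\<^sup>2 \<partial>S) \<le> V" and B: "0 \<le> B" and a: "0 < a" and N: "0 < N"
    and t: "bernstein_radius V B a \<le> t"
  shows "measure (PiM {..<N} (\<lambda>_. S)) {\<omega> \<in> space (PiM {..<N} (\<lambda>_. S)). real N * t < (\<Sum>i<N. g (\<omega> i))}
           \<le> exp (- (real N * a))"
proof -
  let ?M = "PiM {..<N} (\<lambda>_::nat. S)"
  interpret PM: prob_space ?M by (rule prob_space_PiM) (rule ps)
  define A where "A n = {\<omega> \<in> space ?M. real N * (t + 1 / real (Suc n)) \<le> (\<Sum>i<N. g (\<omega> i))}" for n
  have bnd: "measure ?M (A n) \<le> exp (- (real N * a))" for n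
  proof -
    define B' where "B' = B + 1 / (2 * a * real (Suc n))"
    have B': "0 < B'" using B a by (simp add: B'_def add_nonneg_pos)
    have h: "0 \<le> 1 / (2 * a * real (Suc n))" using a by simp
    have bound': "AE s in S. \<bar>g s\<bar> \<le> B'"
      using bound by (rule eventually_mono) (use h in \<open>unfold B'_def, linarith\<close>)
    have "2 * B' * a = 2 * B * a + 1 / real (Suc n)"
      using a by (simp add: B'_def field_simps del: of_nat_Suc)
    hence t': "bernstein_radius V B' a \<le> t + 1 / real (Suc n)" using t by (simp add: bernstein_radius_def)
    show ?thesis unfolding A_def by (rule bernstein_upper_tail[OF ps gm bound' mean var B' a t'])
  qed
  have inc: "incseq A"
  proof (rule incseq_SucI)
    fix n
    have "1 / real (Suc (Suc n)) \<le> 1 / real (Suc n)" by (intro divide_left_mono) auto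
    hence "real N * (t + 1 / real (Suc (Suc n))) \<le> real N * (t + 1 / real (Suc n))"
      by (intro mult_left_mono) auto
    thus "A n \<subseteq> A (Suc n)" unfolding A_def by auto
  qed
  have "(\<Union>n. A n) = {\<omega> \<in> space ?M. real N * t < (\<Sum>i<N. g (\<omega> i))}"
  proof safe
    fix \<omega> n assume "\<omega> \<in> A n"
    moreover have "real N * t < real N * (t + 1 / real (Suc n))" using N by simp
    ultimately show "\<omega> \<in> space ?M" "real N * t < (\<Sum>i<N. g (\<omega> i))" by (auto simp: A_def)
  next
    fix \<omega> assume w: "\<omega> \<in> space ?M" "real N * t < (\<Sum>i<N. g (\<omega> i))"
    have "0 < (\<Sum>i<N. g (\<omega> i)) / real N - t" using w N by (simp add: field_simps)
    then obtain n where "inverse (real (Suc n)) < (\<Sum>i<N. g (\<omega> i)) / real N - t"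
      using reals_Archimedean by blast
    hence "real N * (t + 1 / real (Suc n)) \<le> (\<Sum>i<N. g (\<omega> i))"
      using N by (simp add: field_simps inverse_eq_divide)
    thus "\<omega> \<in> (\<Union>n. A n)" using w by (auto simp: A_def)
  qed
  moreover have "(\<lambda>n. measure ?M (A n)) \<longlonglongrightarrow> measure ?M (\<Union>n. A n)"
    using inc unfolding A_def by (intro PM.finite_Lim_measure_incseq) auto
  hence "measure ?M (\<Union>n. A n) \<le> exp (- (real N * a))"
    by (rule LIMSEQ_le_const2) (use bnd in auto)
  ultimately show ?thesis by simp
qed

lemma bernstein_deviation:
  fixes S :: "'a measure" and f :: "'a \<Rightarrow> real"
  assumes ps: "prob_space S" and fm[measurable]: "f \<in> borel_measurable S"
    and bound: "AE s in S. \<bar>f s - \<mu>\<bar> \<le> B" and mean: "integral\<^sup>L S f = \<mu>"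
    and var: "(\<integral>s. (f s - \<mu>)\<^sup>2 \<partial>S) \<le> V" and B: "0 \<le> B" and a: "0 < a" and N: "0 < N"
    and t: "bernstein_radius V B a \<le> t"
  shows "measure (PiM {..<N} (\<lambda>_. S))
           {\<omega> \<in> space (PiM {..<N} (\<lambda>_. S)). t < \<bar>1 / real N * (\<Sum>i<N. f (\<omega> i)) - \<mu>\<bar>}
           \<le> 2 * exp (- (real N * a))"
proof -
  let ?M = "PiM {..<N} (\<lambda>_::nat. S)"
  interpret S: prob_space S by (rule ps)
  interpret PM: prob_space ?M by (rule prob_space_PiM) (rule ps)
  have "AE s in S. norm (f s) \<le> B + \<bar>\<mu>\<bar>" using bound by (rule eventually_mono) auto
  hence fi: "integrable S f" using fm by (intro S.integrable_const_bound)
  define g where "g s = f s - \<mu>" for s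
  have gm[measurable]: "g \<in> borel_measurable S" unfolding g_def by measurable
  have g0: "integral\<^sup>L S g = 0" and g0': "integral\<^sup>L S (\<lambda>s. - g s) = 0"
    unfolding g_def using fi mean by (simp_all add: S.prob_space)
  have bound_g: "AE s in S. \<bar>g s\<bar> \<le> B" and bound_g': "AE s in S. \<bar>- g s\<bar> \<le> B"
    using bound by (simp_all add: g_def abs_minus_commute)
  have var_g: "(\<integral>s. (g s)\<^sup>2 \<partial>S) \<le> V" and var_g': "(\<integral>s. (- g s)\<^sup>2 \<partial>S) \<le> V"
    using var by (simp_all only: g_def power2_minus)
  have "t < \<bar>x / real N - \<mu>\<bar> \<longleftrightarrow> real N * t < x - real N * \<mu> \<or> real N * t < - (x - real N * \<mu>)"
    for x
  proof -
    have "x / real N - \<mu> = (x - real N * \<mu>) / real N" using N by (simp add: field_simps)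
    hence "t < \<bar>x / real N - \<mu>\<bar> \<longleftrightarrow> real N * t < \<bar>x - real N * \<mu>\<bar>"
      using N by (simp add: field_simps)
    thus ?thesis by linarith
  qed
  moreover have "(\<Sum>i<N. g (\<omega> i)) = (\<Sum>i<N. f (\<omega> i)) - real N * \<mu>" for \<omega>
    by (simp add: g_def sum_subtractf)
  ultimately have split: "{\<omega> \<in> space ?M. t < \<bar>1 / real N * (\<Sum>i<N. f (\<omega> i)) - \<mu>\<bar>}
     = {\<omega> \<in> space ?M. real N * t < (\<Sum>i<N. g (\<omega> i))}
       \<union> {\<omega> \<in> space ?M. real N * t < (\<Sum>i<N. - g (\<omega> i))}"
    by (auto simp: sum_negf)
  have "measure ?M {\<omega> \<in> space ?M. real N * t < (\<Sum>i<N. g (\<omega> i))} \<le> exp (- (real N * a))"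
    by (rule bernstein_upper_tail_strict[OF ps gm bound_g g0 var_g B a N t])
  moreover have "measure ?M {\<omega> \<in> space ?M. real N * t < (\<Sum>i<N. - g (\<omega> i))} \<le> exp (- (real N * a))"
    by (rule bernstein_upper_tail_strict[OF ps _ bound_g' g0' var_g' B a N t]) measurable
  moreover have "measure ?M {\<omega> \<in> space ?M. t < \<bar>1 / real N * (\<Sum>i<N. f (\<omega> i)) - \<mu>\<bar>}
     \<le> measure ?M {\<omega> \<in> space ?M. real N * t < (\<Sum>i<N. g (\<omega> i))}
       + measure ?M {\<omega> \<in> space ?M. real N * t < (\<Sum>i<N. - g (\<omega> i))}"
    unfolding split by (rule measure_Un_le) measurable
  ultimately show ?thesis by linarith
qed

section \<open>The sup norm and the Bellman operator\<close>

lemma abs_Max_image_diff_le: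
  fixes f g :: "'a \<Rightarrow> real"
  assumes U: "finite U" "U \<noteq> {}" and d: "\<And>u. u \<in> U \<Longrightarrow> \<bar>f u - g u\<bar> \<le> d"
  shows "\<bar>Max (f ` U) - Max (g ` U)\<bar> \<le> d"
proof -
  have le: "Max (h1 ` U) \<le> Max (h2 ` U) + d" if h: "\<And>u. u \<in> U \<Longrightarrow> h1 u \<le> h2 u + d"
    for h1 h2 :: "'a \<Rightarrow> real"
  proof (rule Max.boundedI)
    fix y assume "y \<in> h1 ` U"
    then obtain u where u: "u \<in> U" "y = h1 u" by blast
    have "h2 u \<le> Max (h2 ` U)" using U u by simp
    thus "y \<le> Max (h2 ` U) + d" using h[OF u(1)] u by linarith
  qed (use U in auto)
  have "Max (f ` U) \<le> Max (g ` U) + d" by (rule le) (use d in \<open>force simp: abs_le_iff\<close>)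
  moreover have "Max (g ` U) \<le> Max (f ` U) + d" by (rule le) (use d in \<open>force simp: abs_le_iff\<close>)
  ultimately show ?thesis by linarith
qed

lemma supnorm_upper:
  assumes "finite Xs" "finite Us" "x \<in> Xs" "u \<in> Us"
  shows "\<bar>Q x u\<bar> \<le> supnorm Xs Us Q"
  unfolding supnorm_def using assms by (intro Max_ge) force+

lemma supnorm_least:
  assumes "finite Xs" "finite Us" "Xs \<noteq> {}" "Us \<noteq> {}"
    and "\<And>x u. x \<in> Xs \<Longrightarrow> u \<in> Us \<Longrightarrow> \<bar>Q x u\<bar> \<le> c"
  shows "supnorm Xs Us Q \<le> c"
  unfolding supnorm_def using assms by (intro Max.boundedI) auto

lemma supnorm_nonneg:
  assumes "finite Xs" "finite Us" "Xs \<noteq> {}" "Us \<noteq> {}"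
  shows "0 \<le> supnorm Xs Us Q"
proof -
  obtain x u where "x \<in> Xs" "u \<in> Us" using assms by blast
  thus ?thesis using supnorm_upper[OF assms(1,2)] by (meson abs_ge_zero order_trans)
qed

lemma supnorm_cong:
  assumes "\<And>x u. x \<in> Xs \<Longrightarrow> u \<in> Us \<Longrightarrow> Q1 x u = Q2 x u"
  shows "supnorm Xs Us Q1 = supnorm Xs Us Q2"
  unfolding supnorm_def using assms by (intro arg_cong[where f=Max] image_cong) auto

lemma supnorm_le_contraction:
  assumes "finite Xs" "finite Us" "Xs \<noteq> {}" "Us \<noteq> {}" and "\<gamma> < 1"
    and "\<And>x u. x \<in> Xs \<Longrightarrow> u \<in> Us \<Longrightarrow> \<bar>\<Delta> x u\<bar> \<le> \<gamma> * supnorm Xs Us \<Delta> + e"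
  shows "supnorm Xs Us \<Delta> \<le> e / (1 - \<gamma>)"
proof -
  have "supnorm Xs Us \<Delta> \<le> \<gamma> * supnorm Xs Us \<Delta> + e"
    using assms by (intro supnorm_least) auto
  hence "supnorm Xs Us \<Delta> * (1 - \<gamma>) \<le> e" by (simp add: algebra_simps)
  thus ?thesis using assms(5) by (simp add: le_divide_eq)
qed

lemma maxQ_lipschitz:
  assumes "finite Xs" "finite Us" "Us \<noteq> {}" "y \<in> Xs"
  shows "\<bar>maxQ Us Q1 y - maxQ Us Q2 y\<bar> \<le> supnorm Xs Us (\<lambda>x u. Q1 x u - Q2 x u)"
  unfolding maxQ_def
  by (rule abs_Max_image_diff_le)
    (use assms supnorm_upper[OF assms(1,2), of y _ "\<lambda>x u. Q1 x u - Q2 x u"] in auto)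

lemma abs_maxQ_le:
  assumes "finite Xs" "finite Us" "Us \<noteq> {}" "y \<in> Xs"
  shows "\<bar>maxQ Us Q y\<bar> \<le> supnorm Xs Us Q"
proof -
  have "maxQ Us (\<lambda>x u. 0) y = 0" using assms by (simp add: maxQ_def)
  thus ?thesis using maxQ_lipschitz[OF assms, of Q "\<lambda>x u. 0"] by simp
qed

lemma maxQ_cong:
  assumes "\<And>u. u \<in> Us \<Longrightarrow> Q1 y u = Q2 y u"
  shows "maxQ Us Q1 y = maxQ Us Q2 y"
  unfolding maxQ_def using assms by (intro arg_cong[where f=Max] image_cong) auto

lemma abs_sum_pmf_mult_le:
  fixes h :: "nat \<Rightarrow> real"
  assumes "finite Xs" "set_pmf p \<subseteq> Xs" and "\<And>y. y \<in> Xs \<Longrightarrow> \<bar>h y\<bar> \<le> c"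
  shows "\<bar>\<Sum>y\<in>Xs. pmf p y * h y\<bar> \<le> c"
proof -
  have "\<bar>\<Sum>y\<in>Xs. pmf p y * h y\<bar> \<le> (\<Sum>y\<in>Xs. \<bar>pmf p y * h y\<bar>)" by (rule sum_abs)
  also have "\<dots> \<le> (\<Sum>y\<in>Xs. pmf p y * c)"
    using assms(3) by (intro sum_mono) (auto simp: abs_mult intro!: mult_left_mono)
  also have "\<dots> = c" using sum_pmf_eq_1[OF assms(1,2)] by (simp add: sum_distrib_right[symmetric])
  finally show ?thesis .
qed

lemma bellman_lipschitz:
  assumes "finite Xs" "finite Us" "Us \<noteq> {}" "set_pmf (P x u) \<subseteq> Xs" "0 \<le> \<gamma>"
  shows "\<bar>bellman Xs Us P r \<gamma> Q1 x u - bellman Xs Us P r \<gamma> Q2 x u\<bar>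
           \<le> \<gamma> * supnorm Xs Us (\<lambda>x u. Q1 x u - Q2 x u)"
proof -
  have "bellman Xs Us P r \<gamma> Q1 x u - bellman Xs Us P r \<gamma> Q2 x u
      = \<gamma> * (\<Sum>y\<in>Xs. pmf (P x u) y * (maxQ Us Q1 y - maxQ Us Q2 y))"
    by (simp add: bellman_def algebra_simps sum_subtractf)
  also have "\<bar>\<dots>\<bar> \<le> \<gamma> * supnorm Xs Us (\<lambda>x u. Q1 x u - Q2 x u)"
    using assms by (simp add: abs_mult, intro mult_left_mono abs_sum_pmf_mult_le maxQ_lipschitz) auto
  finally show ?thesis .
qed

lemma bellman_cong:
  assumes "\<And>x u. x \<in> Xs \<Longrightarrow> u \<in> Us \<Longrightarrow> Q1 x u = Q2 x u"
  shows "bellman Xs Us P r \<gamma> Q1 x u = bellman Xs Us P r \<gamma> Q2 x u"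
  unfolding bellman_def using assms
  by (intro arg_cong2[where f="(+)"] refl arg_cong2[where f="(*)"] sum.cong) (auto intro!: maxQ_cong)

section \<open>The generative model\<close>

lemma distr_pair_snd:
  assumes N: "prob_space N" and M: "sigma_finite_measure M"
  shows "distr (N \<Otimes>\<^sub>M M) M snd = M"
proof (intro measure_eqI)
  fix A assume A: "A \<in> sets (distr (N \<Otimes>\<^sub>M M) M snd)"
  hence "emeasure (distr (N \<Otimes>\<^sub>M M) M snd) A = emeasure (N \<Otimes>\<^sub>M M) (space N \<times> A)"
    by (auto simp: emeasure_distr space_pair_measure dest: sets.sets_into_space
        intro!: arg_cong2[where f=emeasure])
  with A show "emeasure (distr (N \<Otimes>\<^sub>M M) M snd) A = emeasure M A"
    by (simp add: sigma_finite_measure.emeasure_pair_measure_Times[OF M] prob_space.emeasure_space_1[OF N])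
qed simp

type_synonym qfun = "nat \<Rightarrow> nat \<Rightarrow> real"
type_synonym samples = "nat \<Rightarrow> nat \<times> nat \<Rightarrow> nat \<times> real"

locale generative_mdp =
  fixes Xs Us :: "nat set" and P :: "nat \<Rightarrow> nat \<Rightarrow> nat pmf" and r :: "nat \<Rightarrow> nat \<Rightarrow> real"
    and \<rho> :: "nat \<Rightarrow> nat \<Rightarrow> real measure" and rbar \<gamma> :: real
  assumes states: "finite Xs" "Xs \<noteq> {}" and actions: "finite Us" "Us \<noteq> {}"
    and discount: "0 < \<gamma>" "\<gamma> < 1"
    and transition_support: "\<And>x u. x \<in> Xs \<Longrightarrow> u \<in> Us \<Longrightarrow> set_pmf (P x u) \<subseteq> Xs"
    and reward_law: "\<And>x u. x \<in> Xs \<Longrightarrow> u \<in> Us \<Longrightarrow> prob_space (\<rho> x u) \<and> sets (\<rho> x u) = sets borel \<and>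
          integrable (\<rho> x u) (\<lambda>z. z) \<and> (\<integral>z. z \<partial>(\<rho> x u)) = r x u \<and>
          (AE z in \<rho> x u. \<bar>z - r x u\<bar> \<le> rbar)"
begin

definition step_law :: "nat \<Rightarrow> nat \<Rightarrow> (nat \<times> real) measure" where
  "step_law x u = measure_pmf (P x u) \<Otimes>\<^sub>M \<rho> x u"

definition backup :: "qfun \<Rightarrow> nat \<times> real \<Rightarrow> real" where
  "backup Q z = snd z + \<gamma> * maxQ Us Q (fst z)"

abbreviation "S \<equiv> sample_law Xs Us P \<rho>"

lemma emp_bellman_eq_backup: "emp_bellman Us \<gamma> s Q x u = backup Q (s (x, u))"
  by (simp add: emp_bellman_def backup_def)

lemma sample_law_eq_PiM: "S = PiM (Xs \<times> Us) (\<lambda>p. step_law (fst p) (snd p))"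
  unfolding sample_law_def step_law_def by (intro PiM_cong) auto

lemma prob_space_step_law: "p \<in> Xs \<times> Us \<Longrightarrow> prob_space (step_law (fst p) (snd p))"
  unfolding step_law_def using reward_law by (intro prob_space_pair prob_space_measure_pmf) auto

lemma prob_space_sample_law: "prob_space S"
  unfolding sample_law_eq_PiM by (rule prob_space_PiM) (rule prob_space_step_law)

lemma measurable_sample_component:
  "x \<in> Xs \<Longrightarrow> u \<in> Us \<Longrightarrow> (\<lambda>s. s (x, u)) \<in> measurable S (step_law x u)"
  unfolding sample_law_eq_PiM
  using measurable_component_singleton[of "(x, u)" "Xs \<times> Us" "\<lambda>p. step_law (fst p) (snd p)"] by simp

lemma distr_sample_component:
  "x \<in> Xs \<Longrightarrow> u \<in> Us \<Longrightarrow> distr S (step_law x u) (\<lambda>s. s (x, u)) = step_law x u"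
  unfolding sample_law_eq_PiM
  using distr_PiM_component[of "Xs \<times> Us" "\<lambda>p. step_law (fst p) (snd p)" "(x, u)", OF prob_space_step_law]
  by simp

lemma AE_sample_component:
  assumes "x \<in> Xs" "u \<in> Us" "AE z in step_law x u. Pr z"
  shows "AE s in S. Pr (s (x, u))"
  unfolding sample_law_eq_PiM
  by (rule AE_PiM_component[of "Xs \<times> Us" "\<lambda>p. step_law (fst p) (snd p)" "(x, u)" Pr,
        OF prob_space_step_law])
    (use assms in \<open>simp_all only: fst_conv snd_conv mem_Sigma_iff\<close>)

lemma measurable_fst_step_law: "fst \<in> measurable (step_law x u) (measure_pmf (P x u))"
  unfolding step_law_def by (rule measurable_fst)

lemma measurable_snd_step_law: "snd \<in> measurable (step_law x u) (\<rho> x u)"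
  unfolding step_law_def by (rule measurable_snd)

lemma borel_measurable_backup:
  assumes "x \<in> Xs" "u \<in> Us"
  shows "backup Q \<in> borel_measurable (step_law x u)"
proof -
  have "snd \<in> borel_measurable (step_law x u)"
    using measurable_snd_step_law reward_law[OF assms] measurable_cong_sets by blast
  moreover have "(\<lambda>z. maxQ Us Q (fst z)) \<in> borel_measurable (step_law x u)"
    using measurable_fst_step_law by (rule measurable_compose) simp
  ultimately show ?thesis unfolding backup_def by measurable
qed

lemma borel_measurable_emp_bellman:
  "x \<in> Xs \<Longrightarrow> u \<in> Us \<Longrightarrow> (\<lambda>s. emp_bellman Us \<gamma> s Q x u) \<in> borel_measurable S"
  unfolding emp_bellman_eq_backup
  by (rule measurable_compose[OF measurable_sample_component borel_measurable_backup])

lemma distr_step_law_fst: "x \<in> Xs \<Longrightarrow> u \<in> Us \<Longrightarrow> distr (step_law x u) (measure_pmf (P x u)) fst = measure_pmf (P x u)"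
  unfolding step_law_def using reward_law by (intro prob_space.distr_pair_fst) auto

lemma distr_step_law_snd: "x \<in> Xs \<Longrightarrow> u \<in> Us \<Longrightarrow> distr (step_law x u) (\<rho> x u) snd = \<rho> x u"
  unfolding step_law_def using reward_law
  by (intro distr_pair_snd prob_space_measure_pmf prob_space_imp_sigma_finite) auto

lemma backup_integrable_and_mean:
  assumes a: "x \<in> Xs" "u \<in> Us"
  shows "integrable (step_law x u) (backup Q)"
    and "integral\<^sup>L (step_law x u) (backup Q) = bellman Xs Us P r \<gamma> Q x u"
proof -
  have fin: "finite (set_pmf (P x u))" using transition_support[OF a] states finite_subset by blast
  have ir: "integrable (\<rho> x u) (\<lambda>z. z)" using reward_law[OF a] by blast
  have i1: "integrable (step_law x u) snd"
    using ir integrable_distr_eq[OF measurable_snd_step_law borel_measurable_integrable[OF ir]]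
      distr_step_law_snd[OF a] by simp
  have "integrable (measure_pmf (P x u)) (maxQ Us Q)" by (rule integrable_measure_pmf_finite[OF fin])
  hence i2: "integrable (step_law x u) (\<lambda>z. maxQ Us Q (fst z))"
    using integrable_distr_eq[OF measurable_fst_step_law, of "maxQ Us Q" x u] distr_step_law_fst[OF a]
    by simp
  show "integrable (step_law x u) (backup Q)" unfolding backup_def using i1 i2 by auto
  have "integral\<^sup>L (step_law x u) snd = integral\<^sup>L (distr (step_law x u) (\<rho> x u) snd) (\<lambda>z. z)"
    using reward_law[OF a] by (subst integral_distr[OF measurable_snd_step_law]) auto
  hence e1: "integral\<^sup>L (step_law x u) snd = r x u"
    using distr_step_law_snd[OF a] reward_law[OF a] by simp
  have "integral\<^sup>L (step_law x u) (\<lambda>z. maxQ Us Q (fst z))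
      = integral\<^sup>L (measure_pmf (P x u)) (maxQ Us Q)"
    using integral_distr[OF measurable_fst_step_law, of "maxQ Us Q" x u] distr_step_law_fst[OF a] by simp
  also have "\<dots> = (\<Sum>y\<in>Xs. pmf (P x u) y * maxQ Us Q y)"
    using integral_measure_pmf[of Xs "P x u" "maxQ Us Q"] transition_support[OF a] states by auto
  finally show "integral\<^sup>L (step_law x u) (backup Q) = bellman Xs Us P r \<gamma> Q x u"
    using i1 i2 e1 by (simp add: bellman_def backup_def[abs_def])
qed

lemma emp_bellman_integrable_and_mean:
  assumes a: "x \<in> Xs" "u \<in> Us"
  shows "integrable S (\<lambda>s. emp_bellman Us \<gamma> s Q x u)"
    and "integral\<^sup>L S (\<lambda>s. emp_bellman Us \<gamma> s Q x u) = bellman Xs Us P r \<gamma> Q x u"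
  unfolding emp_bellman_eq_backup
  using backup_integrable_and_mean[OF a, of Q] distr_sample_component[OF a]
    integrable_distr_eq[OF measurable_sample_component[OF a] borel_measurable_backup[OF a]]
    integral_distr[OF measurable_sample_component[OF a] borel_measurable_backup[OF a]]
  by simp_all

lemma AE_step_law:
  assumes a: "x \<in> Xs" "u \<in> Us"
  shows "AE z in step_law x u. fst z \<in> Xs \<and> \<bar>snd z - r x u\<bar> \<le> rbar"
proof -
  have "AE y in distr (step_law x u) (measure_pmf (P x u)) fst. y \<in> Xs"
    using transition_support[OF a] by (subst distr_step_law_fst[OF a]) (auto simp: AE_measure_pmf_iff)
  hence "AE z in step_law x u. fst z \<in> Xs"
    by (rule AE_distrD[OF measurable_fst_step_law])
  moreover have "AE y in distr (step_law x u) (\<rho> x u) snd. \<bar>y - r x u\<bar> \<le> rbar"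
    using reward_law[OF a] by (subst distr_step_law_snd[OF a]) auto
  hence "AE z in step_law x u. \<bar>snd z - r x u\<bar> \<le> rbar"
    by (rule AE_distrD[OF measurable_snd_step_law])
  ultimately show ?thesis by eventually_elim auto
qed

lemma real_card_states_actions_ge_1: "1 \<le> real (card Xs * card Us)"
proof -
  have "0 < card Xs * card Us" using states actions by (simp add: card_gt_0_iff)
  thus ?thesis by (metis Suc_le_eq of_nat_1 of_nat_le_iff One_nat_def)
qed

lemma rbar_nonneg: "0 \<le> rbar"
proof -
  obtain x u where a: "x \<in> Xs" "u \<in> Us" using states actions by blast
  interpret prob_space "\<rho> x u" using reward_law[OF a] by auto
  have "AE z in \<rho> x u. \<bar>z - r x u\<bar> \<le> rbar" using reward_law[OF a] by blast
  hence "AE z in \<rho> x u. 0 \<le> rbar" by (rule eventually_mono) (rule order_trans[OF abs_ge_zero])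
  thus ?thesis by simp
qed

end

section \<open>The fixed point of the shifted operator\<close>

locale shifted_mdp = generative_mdp +
  fixes Qstar Qbar :: qfun and N :: nat
  assumes Qstar_fixed: "\<And>x u. x \<in> Xs \<Longrightarrow> u \<in> Us \<Longrightarrow> bellman Xs Us P r \<gamma> Qstar x u = Qstar x u"
    and N_pos: "0 < N"
begin

abbreviation "SS \<equiv> samples_law N Xs Us P \<rho>"

definition Tsh :: "samples \<Rightarrow> qfun \<Rightarrow> qfun" where
  "Tsh \<omega> Q = shifted_bellman N Xs Us P r \<gamma> \<omega> Qbar Q"

definition fixed_points_within :: "real \<Rightarrow> samples set" where
  "fixed_points_within K = {\<omega> \<in> space SS. \<forall>Qhat.
     (\<forall>x\<in>Xs. \<forall>u\<in>Us. Tsh \<omega> Qhat x u = Qhat x u) \<longrightarrow>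
       supnorm Xs Us (\<lambda>x u. Qhat x u - Qstar x u) \<le> K}"

definition noise_star :: "samples \<Rightarrow> qfun" where
  "noise_star \<omega> x u = avg_emp_bellman N Us \<gamma> \<omega> Qstar x u - Qstar x u"

definition noise_diff :: "samples \<Rightarrow> qfun" where
  "noise_diff \<omega> x u = (avg_emp_bellman N Us \<gamma> \<omega> Qbar x u - avg_emp_bellman N Us \<gamma> \<omega> Qstar x u)
     - (bellman Xs Us P r \<gamma> Qbar x u - bellman Xs Us P r \<gamma> Qstar x u)"

lemma Tsh_lipschitz:
  assumes "x \<in> Xs" "u \<in> Us"
  shows "\<bar>Tsh \<omega> Q1 x u - Tsh \<omega> Q2 x u\<bar> \<le> \<gamma> * supnorm Xs Us (\<lambda>x u. Q1 x u - Q2 x u)"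
  using bellman_lipschitz[of Xs Us P x u \<gamma> r Q1 Q2] states actions transition_support[OF assms] discount
  by (simp add: Tsh_def shifted_bellman_def)

lemma Tsh_cong:
  assumes "\<And>x u. x \<in> Xs \<Longrightarrow> u \<in> Us \<Longrightarrow> Q1 x u = Q2 x u"
  shows "Tsh \<omega> Q1 x u = Tsh \<omega> Q2 x u"
  unfolding Tsh_def shifted_bellman_def using bellman_cong[OF assms] by simp

lemma fixed_point_error_le:
  assumes fixed: "\<And>x u. x \<in> Xs \<Longrightarrow> u \<in> Us \<Longrightarrow> Tsh \<omega> Qhat x u = Qhat x u"
    and star: "\<And>x u. x \<in> Xs \<Longrightarrow> u \<in> Us \<Longrightarrow> \<bar>noise_star \<omega> x u\<bar> \<le> tE"
    and diff: "\<And>x u. x \<in> Xs \<Longrightarrow> u \<in> Us \<Longrightarrow> \<bar>noise_diff \<omega> x u\<bar> \<le> tD"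
  shows "supnorm Xs Us (\<lambda>x u. Qhat x u - Qstar x u) \<le> (tE + tD) / (1 - \<gamma>)"
proof (rule supnorm_le_contraction[OF states(1) actions(1) states(2) actions(2) discount(2)])
  fix x u assume a: "x \<in> Xs" "u \<in> Us"
  have "Qhat x u - Qstar x u
      = (bellman Xs Us P r \<gamma> Qhat x u - bellman Xs Us P r \<gamma> Qstar x u) + noise_star \<omega> x u + noise_diff \<omega> x u"
    using fixed[OF a] Qstar_fixed[OF a]
    by (simp add: Tsh_def shifted_bellman_def noise_star_def noise_diff_def)
  moreover have "\<bar>bellman Xs Us P r \<gamma> Qhat x u - bellman Xs Us P r \<gamma> Qstar x u\<bar>
      \<le> \<gamma> * supnorm Xs Us (\<lambda>x u. Qhat x u - Qstar x u)"
    using bellman_lipschitz[of Xs Us P x u \<gamma> r Qhat Qstar] states actions transition_support[OF a] discount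
    by simp
  ultimately show "\<bar>Qhat x u - Qstar x u\<bar> \<le> \<gamma> * supnorm Xs Us (\<lambda>x u. Qhat x u - Qstar x u) + (tE + tD)"
    using star[OF a] diff[OF a] by linarith
qed

text \<open>The event \<open>fixed_points_within K\<close> quantifies over all \<open>Q\<close>; it is measurable
  because the fixed point is the pointwise limit of the Picard iterates, which are measurable in
  the samples.\<close>

definition Tsh_iter :: "samples \<Rightarrow> nat \<Rightarrow> qfun" where
  "Tsh_iter \<omega> n = (Tsh \<omega> ^^ n) Qstar"

definition Tsh_limit :: "samples \<Rightarrow> qfun" where
  "Tsh_limit \<omega> x u = lim (\<lambda>n. Tsh_iter \<omega> n x u)"

lemma Tsh_iter_Suc: "Tsh_iter \<omega> (Suc n) = Tsh \<omega> (Tsh_iter \<omega> n)"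
  by (simp add: Tsh_iter_def)

lemma supnorm_Tsh_iter_diff_le:
  assumes fixed: "\<And>x u. x \<in> Xs \<Longrightarrow> u \<in> Us \<Longrightarrow> Tsh \<omega> Qhat x u = Qhat x u"
  shows "supnorm Xs Us (\<lambda>x u. Tsh_iter \<omega> n x u - Qhat x u)
           \<le> \<gamma> ^ n * supnorm Xs Us (\<lambda>x u. Qstar x u - Qhat x u)"
proof (induction n)
  case 0 thus ?case by (simp add: Tsh_iter_def)
next
  case (Suc n)
  have "supnorm Xs Us (\<lambda>x u. Tsh_iter \<omega> (Suc n) x u - Qhat x u)
      = supnorm Xs Us (\<lambda>x u. Tsh \<omega> (Tsh_iter \<omega> n) x u - Tsh \<omega> Qhat x u)"
    by (intro supnorm_cong) (simp add: Tsh_iter_Suc fixed)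
  also have "\<dots> \<le> \<gamma> * supnorm Xs Us (\<lambda>x u. Tsh_iter \<omega> n x u - Qhat x u)"
    by (intro supnorm_least states actions Tsh_lipschitz)
  also have "\<dots> \<le> \<gamma> * (\<gamma> ^ n * supnorm Xs Us (\<lambda>x u. Qstar x u - Qhat x u))"
    using Suc discount by (intro mult_left_mono) auto
  finally show ?case by simp
qed

lemma Tsh_limit_eq_fixed_point:
  assumes fixed: "\<And>x u. x \<in> Xs \<Longrightarrow> u \<in> Us \<Longrightarrow> Tsh \<omega> Qhat x u = Qhat x u"
    and a: "x \<in> Xs" "u \<in> Us"
  shows "Tsh_limit \<omega> x u = Qhat x u"
proof -
  define C where "C = supnorm Xs Us (\<lambda>x u. Qstar x u - Qhat x u)"
  have "norm (Tsh_iter \<omega> n x u - Qhat x u) \<le> \<gamma> ^ n * C" for n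
    using supnorm_upper[OF states(1) actions(1) a, of "\<lambda>x u. Tsh_iter \<omega> n x u - Qhat x u"]
      supnorm_Tsh_iter_diff_le[OF fixed, of n]
    unfolding C_def by simp
  hence "\<forall>\<^sub>F n in sequentially. norm (Tsh_iter \<omega> n x u - Qhat x u) \<le> \<gamma> ^ n * C"
    by (intro always_eventually allI)
  moreover have "(\<lambda>n. \<gamma> ^ n * C) \<longlonglongrightarrow> 0"
    using discount by (intro tendsto_mult_left_zero LIMSEQ_power_zero) auto
  ultimately have "(\<lambda>n. Tsh_iter \<omega> n x u - Qhat x u) \<longlonglongrightarrow> 0"
    by (rule Lim_null_comparison)
  hence "(\<lambda>n. Tsh_iter \<omega> n x u) \<longlonglongrightarrow> Qhat x u"
    by (rule LIM_zero_cancel)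
  thus ?thesis unfolding Tsh_limit_def by (rule limI)
qed

lemma samples_law_eq_PiM: "SS = PiM {..<N} (\<lambda>_. S)"
  by (simp add: samples_law_def)

lemma avg_emp_bellman_eq: "avg_emp_bellman N Us \<gamma> \<omega> Q x u = 1 / real N * (\<Sum>i<N. emp_bellman Us \<gamma> (\<omega> i) Q x u)"
  by (simp add: avg_emp_bellman_def)

lemma borel_measurable_avg_emp_bellman:
  assumes a: "x \<in> Xs" "u \<in> Us"
  shows "(\<lambda>\<omega>. avg_emp_bellman N Us \<gamma> \<omega> Q x u) \<in> borel_measurable SS"
proof -
  have "(\<lambda>\<omega>. emp_bellman Us \<gamma> (\<omega> i) Q x u) \<in> borel_measurable SS" if i: "i \<in> {..<N}" for i
    unfolding samples_law_eq_PiM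
    by (rule measurable_compose[OF measurable_component_singleton[OF i] borel_measurable_emp_bellman[OF a]])
  thus ?thesis unfolding avg_emp_bellman_eq
    by (intro borel_measurable_times borel_measurable_const borel_measurable_sum) auto
qed

lemma borel_measurable_Tsh:
  assumes F: "\<And>x u. x \<in> Xs \<Longrightarrow> u \<in> Us \<Longrightarrow> (\<lambda>\<omega>. F \<omega> x u) \<in> borel_measurable SS"
    and a: "x \<in> Xs" "u \<in> Us"
  shows "(\<lambda>\<omega>. Tsh \<omega> (F \<omega>) x u) \<in> borel_measurable SS"
proof -
  have "(\<lambda>\<omega>. maxQ Us (F \<omega>) y) \<in> borel_measurable SS" if "y \<in> Xs" for y
    unfolding maxQ_def using actions that F by (intro borel_measurable_Max) auto
  hence "(\<lambda>\<omega>. bellman Xs Us P r \<gamma> (F \<omega>) x u) \<in> borel_measurable SS"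
    unfolding bellman_def
    by (intro borel_measurable_add borel_measurable_times borel_measurable_const borel_measurable_sum) auto
  thus ?thesis unfolding Tsh_def shifted_bellman_def using borel_measurable_avg_emp_bellman[OF a]
    by (intro borel_measurable_add borel_measurable_diff borel_measurable_const) auto
qed

lemma borel_measurable_Tsh_limit:
  assumes "x \<in> Xs" "u \<in> Us"
  shows "(\<lambda>\<omega>. Tsh_limit \<omega> x u) \<in> borel_measurable SS"
proof -
  have "(\<lambda>\<omega>. Tsh_iter \<omega> n x u) \<in> borel_measurable SS" if "x \<in> Xs" "u \<in> Us" for n x u
    using that
  proof (induction n arbitrary: x u)
    case 0 thus ?case by (simp add: Tsh_iter_def)
  next
    case (Suc n)
    show ?case unfolding Tsh_iter_Suc by (rule borel_measurable_Tsh[OF Suc.IH Suc.prems])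
  qed
  thus ?thesis unfolding Tsh_limit_def using assms by (intro borel_measurable_lim_metric)
qed

lemma borel_measurable_supnorm:
  assumes "\<And>x u. x \<in> Xs \<Longrightarrow> u \<in> Us \<Longrightarrow> (\<lambda>\<omega>. G \<omega> x u) \<in> borel_measurable SS"
  shows "(\<lambda>\<omega>. supnorm Xs Us (G \<omega>)) \<in> borel_measurable SS"
proof -
  have "(\<lambda>\<omega>. supnorm Xs Us (G \<omega>)) = (\<lambda>\<omega>. Max ((\<lambda>p. \<bar>G \<omega> (fst p) (snd p)\<bar>) ` (Xs \<times> Us)))"
    unfolding supnorm_def by (simp add: case_prod_beta')
  also have "\<dots> \<in> borel_measurable SS"
    using states actions assms by (intro borel_measurable_Max borel_measurable_abs) auto
  finally show ?thesis .
qed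

lemma fixed_points_within_eq:
  "fixed_points_within K = {\<omega> \<in> space SS. (\<forall>x\<in>Xs. \<forall>u\<in>Us. Tsh \<omega> (Tsh_limit \<omega>) x u = Tsh_limit \<omega> x u)
     \<longrightarrow> supnorm Xs Us (\<lambda>x u. Tsh_limit \<omega> x u - Qstar x u) \<le> K}"
proof (intro set_eqI iffI)
  fix \<omega> assume "\<omega> \<in> fixed_points_within K"
  thus "\<omega> \<in> {\<omega> \<in> space SS. (\<forall>x\<in>Xs. \<forall>u\<in>Us. Tsh \<omega> (Tsh_limit \<omega>) x u = Tsh_limit \<omega> x u)
     \<longrightarrow> supnorm Xs Us (\<lambda>x u. Tsh_limit \<omega> x u - Qstar x u) \<le> K}"
    by (auto simp: fixed_points_within_def)
next
  fix \<omega> assume \<omega>: "\<omega> \<in> {\<omega> \<in> space SS. (\<forall>x\<in>Xs. \<forall>u\<in>Us. Tsh \<omega> (Tsh_limit \<omega>) x u = Tsh_limit \<omega> x u)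
     \<longrightarrow> supnorm Xs Us (\<lambda>x u. Tsh_limit \<omega> x u - Qstar x u) \<le> K}"
  have "supnorm Xs Us (\<lambda>x u. Qhat x u - Qstar x u) \<le> K"
    if "\<forall>x\<in>Xs. \<forall>u\<in>Us. Tsh \<omega> Qhat x u = Qhat x u" for Qhat
  proof -
    have lim: "\<And>x u. x \<in> Xs \<Longrightarrow> u \<in> Us \<Longrightarrow> Tsh_limit \<omega> x u = Qhat x u"
      using that by (intro Tsh_limit_eq_fixed_point) auto
    have "\<forall>x\<in>Xs. \<forall>u\<in>Us. Tsh \<omega> (Tsh_limit \<omega>) x u = Tsh_limit \<omega> x u"
    proof (intro ballI)
      fix x u assume a: "x \<in> Xs" "u \<in> Us"
      have "Tsh \<omega> (Tsh_limit \<omega>) x u = Tsh \<omega> Qhat x u" by (rule Tsh_cong) (rule lim)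
      thus "Tsh \<omega> (Tsh_limit \<omega>) x u = Tsh_limit \<omega> x u" using that a lim[OF a] by simp
    qed
    hence "supnorm Xs Us (\<lambda>x u. Tsh_limit \<omega> x u - Qstar x u) \<le> K" using \<omega> by blast
    moreover have "supnorm Xs Us (\<lambda>x u. Qhat x u - Qstar x u) = supnorm Xs Us (\<lambda>x u. Tsh_limit \<omega> x u - Qstar x u)"
      by (intro supnorm_cong) (simp add: lim)
    ultimately show ?thesis by simp
  qed
  thus "\<omega> \<in> fixed_points_within K" using \<omega> by (simp add: fixed_points_within_def)
qed

lemma sets_fixed_points_within: "fixed_points_within K \<in> sets SS"
proof -
  have "{\<omega> \<in> space SS. supnorm Xs Us (\<lambda>x u. Tsh_limit \<omega> x u - Qstar x u) \<le> K} \<in> sets SS"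
    using borel_measurable_Tsh_limit
    by (intro borel_measurable_le borel_measurable_supnorm borel_measurable_diff borel_measurable_const)
      auto
  moreover have "{\<omega> \<in> space SS. \<forall>x\<in>Xs. \<forall>u\<in>Us. Tsh \<omega> (Tsh_limit \<omega>) x u = Tsh_limit \<omega> x u} \<in> sets SS"
    using states actions
    by (intro sets.sets_Collect_finite_All borel_measurable_eq borel_measurable_Tsh
        borel_measurable_Tsh_limit) auto
  ultimately show ?thesis unfolding fixed_points_within_eq by (rule sets.sets_Collect_imp)
qed

end

section \<open>Concentration of the noise\<close>

context shifted_mdp
begin

definition init_err :: real where
  "init_err = supnorm Xs Us (\<lambda>x u. Qbar x u - Qstar x u)"

definition b_star :: real where
  "b_star = rbar + \<gamma> * supnorm Xs Us Qstar"

definition sigma2 :: real where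
  "sigma2 = sigma_diag Xs Us P \<rho> \<gamma> Qstar"

lemma init_err_nonneg: "0 \<le> init_err"
  unfolding init_err_def using states actions by (intro supnorm_nonneg) auto

lemma b_star_nonneg: "0 \<le> b_star"
  unfolding b_star_def using rbar_nonneg discount supnorm_nonneg[OF states(1) actions(1) states(2) actions(2)]
  by simp

lemma variance_le_sigma2:
  assumes a: "x \<in> Xs" "u \<in> Us"
  shows "(\<integral>s. (emp_bellman Us \<gamma> s Qstar x u - Qstar x u)\<^sup>2 \<partial>S) \<le> sigma2"
proof -
  have "(\<integral>s. (emp_bellman Us \<gamma> s Qstar x u - Qstar x u)\<^sup>2 \<partial>S) = var_of S (\<lambda>s. emp_bellman Us \<gamma> s Qstar x u)"
    unfolding var_of_def using emp_bellman_integrable_and_mean(2)[OF a] Qstar_fixed[OF a] by simp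
  also have "\<dots> \<le> \<bar>var_of S (\<lambda>s. emp_bellman Us \<gamma> s Qstar x u)\<bar>" by simp
  also have "\<dots> \<le> sigma2"
    unfolding sigma2_def sigma_diag_def using a states actions by (intro Max_ge) force+
  finally show ?thesis .
qed

lemma sigma2_nonneg: "0 \<le> sigma2"
proof -
  obtain x u where "x \<in> Xs" "u \<in> Us" using states actions by blast
  hence "\<bar>var_of S (\<lambda>s. emp_bellman Us \<gamma> s Qstar x u)\<bar> \<le> sigma2"
    unfolding sigma2_def sigma_diag_def using states actions by (intro Max_ge) force+
  thus ?thesis by linarith
qed

lemma AE_abs_emp_bellman_Qstar_le:
  assumes a: "x \<in> Xs" "u \<in> Us"
  shows "AE s in S. \<bar>emp_bellman Us \<gamma> s Qstar x u - Qstar x u\<bar> \<le> 2 * b_star"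
  using AE_sample_component[OF a AE_step_law[OF a]]
proof (rule eventually_mono)
  fix s assume h: "fst (s (x, u)) \<in> Xs \<and> \<bar>snd (s (x, u)) - r x u\<bar> \<le> rbar"
  have "\<bar>maxQ Us Qstar (fst (s (x, u)))\<bar> \<le> supnorm Xs Us Qstar"
    using h states actions by (intro abs_maxQ_le) auto
  hence "\<bar>\<gamma> * maxQ Us Qstar (fst (s (x, u)))\<bar> \<le> \<gamma> * supnorm Xs Us Qstar"
    using discount by (simp add: abs_mult mult_left_mono)
  moreover have "\<bar>\<Sum>y\<in>Xs. pmf (P x u) y * maxQ Us Qstar y\<bar> \<le> supnorm Xs Us Qstar"
    using states actions transition_support[OF a] by (intro abs_sum_pmf_mult_le abs_maxQ_le) auto
  hence "\<bar>\<gamma> * (\<Sum>y\<in>Xs. pmf (P x u) y * maxQ Us Qstar y)\<bar> \<le> \<gamma> * supnorm Xs Us Qstar"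
    using discount by (simp add: abs_mult mult_left_mono)
  moreover have "emp_bellman Us \<gamma> s Qstar x u - Qstar x u
      = (snd (s (x, u)) - r x u) + \<gamma> * maxQ Us Qstar (fst (s (x, u)))
        - \<gamma> * (\<Sum>y\<in>Xs. pmf (P x u) y * maxQ Us Qstar y)"
    using Qstar_fixed[OF a] by (simp add: emp_bellman_def bellman_def)
  ultimately show "\<bar>emp_bellman Us \<gamma> s Qstar x u - Qstar x u\<bar> \<le> 2 * b_star"
    using conjunct2[OF h] rbar_nonneg unfolding b_star_def by (smt (verit))
qed

lemma AE_abs_emp_bellman_diff_le:
  assumes a: "x \<in> Xs" "u \<in> Us"
  shows "AE s in S. \<bar>(emp_bellman Us \<gamma> s Qbar x u - emp_bellman Us \<gamma> s Qstar x u)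
                     - (bellman Xs Us P r \<gamma> Qbar x u - bellman Xs Us P r \<gamma> Qstar x u)\<bar> \<le> 2 * init_err"
  using AE_sample_component[OF a AE_step_law[OF a]]
proof (rule eventually_mono)
  fix s assume h: "fst (s (x, u)) \<in> Xs \<and> \<bar>snd (s (x, u)) - r x u\<bar> \<le> rbar"
  let ?d = "\<lambda>y. maxQ Us Qbar y - maxQ Us Qstar y"
  have "\<bar>?d (fst (s (x, u)))\<bar> \<le> init_err"
    unfolding init_err_def using h states actions by (intro maxQ_lipschitz) auto
  hence "\<bar>\<gamma> * ?d (fst (s (x, u)))\<bar> \<le> \<gamma> * init_err"
    using discount by (simp add: abs_mult mult_left_mono)
  moreover have "\<bar>\<Sum>y\<in>Xs. pmf (P x u) y * ?d y\<bar> \<le> init_err"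
    unfolding init_err_def using states actions transition_support[OF a]
    by (intro abs_sum_pmf_mult_le maxQ_lipschitz) auto
  hence "\<bar>\<gamma> * (\<Sum>y\<in>Xs. pmf (P x u) y * ?d y)\<bar> \<le> \<gamma> * init_err"
    using discount by (simp add: abs_mult mult_left_mono)
  moreover have "\<gamma> * init_err \<le> init_err"
    using discount init_err_nonneg by (simp add: mult_left_le_one_le)
  moreover have "(emp_bellman Us \<gamma> s Qbar x u - emp_bellman Us \<gamma> s Qstar x u)
                 - (bellman Xs Us P r \<gamma> Qbar x u - bellman Xs Us P r \<gamma> Qstar x u)
      = \<gamma> * ?d (fst (s (x, u))) - \<gamma> * (\<Sum>y\<in>Xs. pmf (P x u) y * ?d y)"
    by (simp add: emp_bellman_def bellman_def algebra_simps sum_subtractf)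
  ultimately show "\<bar>(emp_bellman Us \<gamma> s Qbar x u - emp_bellman Us \<gamma> s Qstar x u)
                     - (bellman Xs Us P r \<gamma> Qbar x u - bellman Xs Us P r \<gamma> Qstar x u)\<bar> \<le> 2 * init_err"
    by (smt (verit))
qed

lemma prob_noise_star_gt:
  assumes a: "x \<in> Xs" "u \<in> Us" and "0 < c" and t: "bernstein_radius sigma2 (2 * b_star) c \<le> t"
  shows "measure SS {\<omega> \<in> space SS. t < \<bar>noise_star \<omega> x u\<bar>} \<le> 2 * exp (- (real N * c))"
  unfolding samples_law_eq_PiM noise_star_def avg_emp_bellman_eq
  using Qstar_fixed[OF a] b_star_nonneg
  by (intro bernstein_deviation[OF prob_space_sample_law borel_measurable_emp_bellman[OF a]
        AE_abs_emp_bellman_Qstar_le[OF a] _ variance_le_sigma2[OF a] _ assms(3) N_pos t])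
    (simp_all add: emp_bellman_integrable_and_mean(2)[OF a])

lemma prob_noise_diff_gt:
  assumes a: "x \<in> Xs" "u \<in> Us" and "0 < c"
    and t: "bernstein_radius ((2 * init_err)\<^sup>2) (2 * init_err) c \<le> t"
  shows "measure SS {\<omega> \<in> space SS. t < \<bar>noise_diff \<omega> x u\<bar>} \<le> 2 * exp (- (real N * c))"
proof -
  define f where "f s = emp_bellman Us \<gamma> s Qbar x u - emp_bellman Us \<gamma> s Qstar x u" for s
  define \<mu> where "\<mu> = bellman Xs Us P r \<gamma> Qbar x u - bellman Xs Us P r \<gamma> Qstar x u"
  have fm: "f \<in> borel_measurable S"
    unfolding f_def using borel_measurable_emp_bellman[OF a] by (intro borel_measurable_diff)
  have bound: "AE s in S. \<bar>f s - \<mu>\<bar> \<le> 2 * init_err"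
    unfolding f_def \<mu>_def by (rule AE_abs_emp_bellman_diff_le[OF a])
  have "integral\<^sup>L S f = \<mu>"
    unfolding f_def \<mu>_def using emp_bellman_integrable_and_mean[OF a] by simp
  moreover have "(\<lambda>s. f s - \<mu>) \<in> borel_measurable S" using fm by measurable
  hence "(\<integral>s. (f s - \<mu>)\<^sup>2 \<partial>S) \<le> (2 * init_err)\<^sup>2"
    by (rule prob_space.integral_square_le(2)[OF prob_space_sample_law _ bound])
  moreover have "noise_diff \<omega> x u = 1 / real N * (\<Sum>i<N. f (\<omega> i)) - \<mu>" for \<omega>
    by (simp add: noise_diff_def avg_emp_bellman_eq f_def \<mu>_def sum_subtractf right_diff_distrib)
  ultimately show ?thesis
    unfolding samples_law_eq_PiM
    using bernstein_deviation[OF prob_space_sample_law fm bound _ _ _ assms(3) N_pos t] init_err_nonneg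
    by simp
qed

lemma borel_measurable_noise_star: "x \<in> Xs \<Longrightarrow> u \<in> Us \<Longrightarrow> (\<lambda>\<omega>. noise_star \<omega> x u) \<in> borel_measurable SS"
  unfolding noise_star_def by (intro borel_measurable_diff borel_measurable_avg_emp_bellman) auto

lemma borel_measurable_noise_diff: "x \<in> Xs \<Longrightarrow> u \<in> Us \<Longrightarrow> (\<lambda>\<omega>. noise_diff \<omega> x u) \<in> borel_measurable SS"
  unfolding noise_diff_def by (intro borel_measurable_diff borel_measurable_avg_emp_bellman) auto

lemma prob_fixed_points_within:
  assumes c: "0 < c"
    and K: "(bernstein_radius sigma2 (2 * b_star) c
             + bernstein_radius ((2 * init_err)\<^sup>2) (2 * init_err) c) / (1 - \<gamma>) \<le> K"
  shows "1 - 4 * real (card Xs * card Us) * exp (- (real N * c)) \<le> measure SS (fixed_points_within K)"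
proof -
  interpret SS: prob_space SS
    unfolding samples_law_eq_PiM by (rule prob_space_PiM) (rule prob_space_sample_law)
  define tE where "tE = bernstein_radius sigma2 (2 * b_star) c"
  define tD where "tD = bernstein_radius ((2 * init_err)\<^sup>2) (2 * init_err) c"
  define bad_star where "bad_star p = {\<omega> \<in> space SS. tE < \<bar>noise_star \<omega> (fst p) (snd p)\<bar>}" for p
  define bad_diff where "bad_diff p = {\<omega> \<in> space SS. tD < \<bar>noise_diff \<omega> (fst p) (snd p)\<bar>}" for p
  define bad where "bad p = bad_star p \<union> bad_diff p" for p
  have sets_bad_star: "bad_star p \<in> sets SS" and sets_bad_diff: "bad_diff p \<in> sets SS"
    if "p \<in> Xs \<times> Us" for p
    unfolding bad_star_def bad_diff_def using that borel_measurable_noise_star borel_measurable_noise_diff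
    by (intro borel_measurable_less borel_measurable_abs borel_measurable_const; force)+
  hence sets_bad: "bad p \<in> sets SS" if "p \<in> Xs \<times> Us" for p
    using that unfolding bad_def by blast
  have "measure SS (bad p) \<le> 4 * exp (- (real N * c))" if p: "p \<in> Xs \<times> Us" for p
  proof -
    have "measure SS (bad p) \<le> measure SS (bad_star p) + measure SS (bad_diff p)"
      unfolding bad_def using sets_bad_star[OF p] sets_bad_diff[OF p] by (rule measure_Un_le)
    moreover have "measure SS (bad_star p) \<le> 2 * exp (- (real N * c))"
      unfolding bad_star_def using p c by (intro prob_noise_star_gt) (auto simp: tE_def)
    moreover have "measure SS (bad_diff p) \<le> 2 * exp (- (real N * c))"
      unfolding bad_diff_def using p c by (intro prob_noise_diff_gt) (auto simp: tD_def)
    ultimately show ?thesis by linarith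
  qed
  hence "measure SS (\<Union>p\<in>Xs \<times> Us. bad p) \<le> (\<Sum>p\<in>Xs \<times> Us. 4 * exp (- (real N * c)))"
    using sets_bad states actions by (intro order_trans[OF measure_UNION_le sum_mono]) auto
  also have "\<dots> = 4 * real (card Xs * card Us) * exp (- (real N * c))"
    by (simp add: card_cartesian_product)
  finally have prob_bad:
    "measure SS (\<Union>p\<in>Xs \<times> Us. bad p) \<le> 4 * real (card Xs * card Us) * exp (- (real N * c))" .
  have "space SS - (\<Union>p\<in>Xs \<times> Us. bad p) \<subseteq> fixed_points_within K"
  proof
    fix \<omega> assume \<omega>: "\<omega> \<in> space SS - (\<Union>p\<in>Xs \<times> Us. bad p)"
    have "supnorm Xs Us (\<lambda>x u. Qhat x u - Qstar x u) \<le> K"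
      if "\<forall>x\<in>Xs. \<forall>u\<in>Us. Tsh \<omega> Qhat x u = Qhat x u" for Qhat
    proof -
      have "supnorm Xs Us (\<lambda>x u. Qhat x u - Qstar x u) \<le> (tE + tD) / (1 - \<gamma>)"
        using that \<omega> by (intro fixed_point_error_le) (force simp: bad_def bad_star_def bad_diff_def not_less)+
      thus ?thesis using K by (simp add: tE_def tD_def)
    qed
    thus "\<omega> \<in> fixed_points_within K" using \<omega> by (simp add: fixed_points_within_def)
  qed
  hence "measure SS (space SS - (\<Union>p\<in>Xs \<times> Us. bad p)) \<le> measure SS (fixed_points_within K)"
    by (intro SS.finite_measure_mono sets_fixed_points_within)
  moreover have "measure SS (space SS - (\<Union>p\<in>Xs \<times> Us. bad p)) = 1 - measure SS (\<Union>p\<in>Xs \<times> Us. bad p)"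
    using sets_bad states actions by (intro SS.prob_compl sets.finite_UN) auto
  ultimately show ?thesis using prob_bad by linarith
qed

end

section \<open>The sample size\<close>

lemma bernstein_radii_le:
  fixes V b W \<gamma> c :: real
  assumes V: "0 \<le> V" and b: "0 \<le> b" and W: "0 \<le> W" and \<gamma>: "0 \<le> \<gamma>" "\<gamma> < 1"
    and c: "0 < c" "c \<le> (1 - \<gamma>)\<^sup>2 / 1000000"
  shows "(bernstein_radius V (2 * b) c + bernstein_radius ((2 * W)\<^sup>2) (2 * W) c) / (1 - \<gamma>)
           \<le> W / 33 + 4 * (sqrt V / (1 - \<gamma>) * sqrt c + b / (1 - \<gamma>) * c)"
proof -
  have g: "0 < 1 - \<gamma>" using \<gamma> by simp
  have "sqrt c \<le> sqrt ((1 - \<gamma>)\<^sup>2 / 1000000)" using c by simp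
  also have "\<dots> = (1 - \<gamma>) / 1000" using g by (simp add: real_sqrt_divide)
  finally have sqrt_c: "sqrt c \<le> (1 - \<gamma>) / 1000" .
  moreover have "(1 - \<gamma>) / 1000 \<le> 1" using \<gamma> by simp
  ultimately have "sqrt c \<le> 1" by linarith
  hence "sqrt c * sqrt c \<le> 1 * sqrt c" using c by (intro mult_right_mono) simp_all
  hence "c \<le> sqrt c" using c by simp
  hence "W * c \<le> W * sqrt c" using W by (rule mult_left_mono)
  moreover have "W * sqrt c \<le> W * ((1 - \<gamma>) / 1000)" using sqrt_c W by (rule mult_left_mono)
  moreover have "0 \<le> W * (1 - \<gamma>)" using W g by simp
  moreover have "bernstein_radius ((2 * W)\<^sup>2) (2 * W) c = 4 * W * sqrt c + 4 * W * c"
    using W by (simp add: bernstein_radius_def real_sqrt_mult)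
  ultimately have diff: "bernstein_radius ((2 * W)\<^sup>2) (2 * W) c \<le> W / 33 * (1 - \<gamma>)" by linarith
  have "0 \<le> sqrt V * sqrt c" using V c by simp
  hence "bernstein_radius V (2 * b) c \<le> 4 * (sqrt V * sqrt c + b * c)"
    unfolding bernstein_radius_def real_sqrt_mult by (simp add: algebra_simps)
  hence "(bernstein_radius V (2 * b) c + bernstein_radius ((2 * W)\<^sup>2) (2 * W) c) / (1 - \<gamma>)
      \<le> (4 * (sqrt V * sqrt c + b * c) + W / 33 * (1 - \<gamma>)) / (1 - \<gamma>)"
    using diff g by (intro divide_right_mono) auto
  also have "\<dots> = W / 33 + 4 * (sqrt V / (1 - \<gamma>) * sqrt c + b / (1 - \<gamma>) * c)"
  proof -
    have gen: "(4 * (p * q + s * t) + w * d) / d = w + 4 * (p / d * q + s / d * t)" if "d \<noteq> 0"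
      for p q s t w d :: real
      using that by (simp add: field_simps)
    have "1 - \<gamma> \<noteq> 0" using g by simp
    thus ?thesis by (rule gen)
  qed
  finally show ?thesis .
qed

lemma ln_confidence_pos:
  fixes D M \<delta> :: real
  assumes "1 \<le> D" "1 \<le> M" "0 < \<delta>" "\<delta> < 1"
  shows "0 < ln (8 * D * M / \<delta>)"
proof -
  have "1 \<le> D * M" using assms mult_mono[of 1 D 1 M] by simp
  hence "\<delta> < 8 * D * M" using assms by linarith
  hence "1 < 8 * D * M / \<delta>" using assms by (simp add: less_divide_eq)
  thus ?thesis by simp
qed

context shifted_mdp
begin

lemma prob_fixed_points_within_sample_size:
  assumes M: "1 \<le> M" and \<delta>: "0 < \<delta>" "\<delta> < 1"
    and N_large: "1000000 * ln (8 * real (card Xs * card Us) * real M / \<delta>) / (1 - \<gamma>)\<^sup>2 \<le> real N"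
  defines "L \<equiv> ln (8 * real (card Xs * card Us) * real M / \<delta>)"
  shows "1 - \<delta> / (2 * real M) \<le> measure SS (fixed_points_within
           (init_err / 33 + 4 * (sqrt sigma2 / (1 - \<gamma>) * sqrt (L / real N) + b_star / (1 - \<gamma>) * (L / real N))))"
proof -
  note D = real_card_states_actions_ge_1
  have "0 < L" unfolding L_def using ln_confidence_pos[OF D _ \<delta>] M by simp
  hence c: "0 < L / real N" using N_pos by simp
  have "L \<le> (1 - \<gamma>)\<^sup>2 / 1000000 * real N"
    using N_large discount by (simp add: L_def pos_divide_le_eq mult.commute)
  hence "L / real N \<le> (1 - \<gamma>)\<^sup>2 / 1000000" using N_pos by (simp add: pos_divide_le_eq)
  note K = bernstein_radii_le[OF sigma2_nonneg b_star_nonneg init_err_nonneg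
      less_imp_le[OF discount(1)] discount(2) c this]
  have "exp L = 8 * real (card Xs * card Us) * real M / \<delta>"
    unfolding L_def using D M \<delta> by (intro exp_ln) simp
  hence "4 * real (card Xs * card Us) * exp (- (real N * (L / real N))) = \<delta> / (2 * real M)"
    using N_pos D M \<delta> by (simp add: exp_minus field_simps)
  thus ?thesis using prob_fixed_points_within[OF c K] by simp
qed

end

theorem mainTheorem9:
  shows "\<exists>c c4 :: real. c > 0 \<and> c4 > 0 \<and>
    (\<forall>(Xs :: nat set) (Us :: nat set) (P :: nat \<Rightarrow> nat \<Rightarrow> nat pmf) (r :: nat \<Rightarrow> nat \<Rightarrow> real)
       (\<rho> :: nat \<Rightarrow> nat \<Rightarrow> real measure) (rbar :: real) (\<gamma> :: real)
       (Qstar :: nat \<Rightarrow> nat \<Rightarrow> real) (Qbar :: nat \<Rightarrow> nat \<Rightarrow> real) (M :: nat) (\<delta> :: real) (N :: nat).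
      finite Xs \<and> Xs \<noteq> {} \<and> finite Us \<and> Us \<noteq> {} \<and>
      0 < \<gamma> \<and> \<gamma> < 1 \<and>
      (\<forall>x\<in>Xs. \<forall>u\<in>Us. set_pmf (P x u) \<subseteq> Xs) \<and>
      (\<forall>x\<in>Xs. \<forall>u\<in>Us. prob_space (\<rho> x u) \<and> sets (\<rho> x u) = sets borel \<and>
          integrable (\<rho> x u) (\<lambda>z. z) \<and> (\<integral>z. z \<partial>(\<rho> x u)) = r x u \<and>
          (AE z in \<rho> x u. \<bar>z - r x u\<bar> \<le> rbar)) \<and>
      (\<forall>x\<in>Xs. \<forall>u\<in>Us. bellman Xs Us P r \<gamma> Qstar x u = Qstar x u) \<and>
      M \<ge> 1 \<and> 0 < \<delta> \<and> \<delta> < 1 \<and>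
      real N \<ge> c * ln (8 * real (card Xs * card Us) * real M / \<delta>) / (1 - \<gamma>)\<^sup>2
      \<longrightarrow>
      measure (samples_law N Xs Us P \<rho>)
        {\<omega> \<in> space (samples_law N Xs Us P \<rho>).
          \<forall>Qhat. (\<forall>x\<in>Xs. \<forall>u\<in>Us. shifted_bellman N Xs Us P r \<gamma> \<omega> Qbar Qhat x u = Qhat x u) \<longrightarrow>
            supnorm Xs Us (\<lambda>x u. Qhat x u - Qstar x u)
              \<le> supnorm Xs Us (\<lambda>x u. Qbar x u - Qstar x u) / 33
                 + c4 * (sqrt (sigma_diag Xs Us P \<rho> \<gamma> Qstar) / (1 - \<gamma>)
                          * sqrt (ln (8 * real (card Xs * card Us) * real M / \<delta>) / real N)
                        + (rbar + \<gamma> * supnorm Xs Us Qstar) / (1 - \<gamma>)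
                          * (ln (8 * real (card Xs * card Us) * real M / \<delta>) / real N))}
      \<ge> 1 - \<delta> / (2 * real M))"
proof ((rule exI[of _ 1000000], rule exI[of _ 4], intro conjI allI impI; (elim conjE)?), goal_cases)
  case (3 Xs Us P r \<rho> rbar \<gamma> Qstar Qbar M \<delta> N)
  note conf = "3"(10-12) and N_large = "3"(13)
  interpret generative_mdp Xs Us P r \<rho> rbar \<gamma> using "3"(1-8) by unfold_locales auto
  have "0 < ln (8 * real (card Xs * card Us) * real M / \<delta>)"
    using ln_confidence_pos[OF real_card_states_actions_ge_1, of "real M" \<delta>] conf by simp
  hence "0 < 1000000 * ln (8 * real (card Xs * card Us) * real M / \<delta>) / (1 - \<gamma>)\<^sup>2"
    using discount by simp
  hence "0 < N" using N_large by (metis of_nat_0_less_iff order_less_le_trans)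
  then interpret shifted_mdp Xs Us P r \<rho> rbar \<gamma> Qstar Qbar N using "3"(9) by unfold_locales auto
  show ?case
    using prob_fixed_points_within_sample_size[OF conf N_large]
    by (simp add: fixed_points_within_def Tsh_def init_err_def sigma2_def b_star_def)
qed simp_all

end
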